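(* Let $X_1,\dots,X_k$ be i.i.d. random points in $\mathbb{R}^d$ with a bounded probability density $f$. Then there exists a constant $c^\star$ (depending only on $d$, $f$ and $k$) such that for every $r>0$, \[ \mathbb{P}\{\{X_1,\dots,X_k\}\text{ is contained in a ball of radius } r\}\le c^\star r^{d(k-1)}. \] *)

theory Defs
  imports "HOL-Probability.Probability"
begin

end

theory Submission
  imports Defs "HOL-Analysis.Ball_Volume"
begin

(* If X_1, ..., X_k lie in a common ball of radius r, then every X_i lies within 2r of X_1.
   By independence the joint law is the k-fold product of the density measure, so integrating
   out X_1 leaves k - 1 independent points that must each fall into the ball of radius 2r
   around it; for a density bounded by B that ball has mass at most B vol(B_1) (2r)^d.
   Hence the probability is at most (B vol(B_1) 2^d)^(k-1) r^(d(k-1)). *)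

lemma emeasure_density_cball_le:
  fixes f :: "'a::euclidean_space \<Rightarrow> ennreal"
  assumes f_meas: "f \<in> borel_measurable lborel"
    and f_le: "\<And>x. f x \<le> ennreal B" and B: "B \<ge> 0" and \<rho>: "\<rho> \<ge> 0"
  shows "emeasure (density lborel f) (cball x \<rho>) \<le> ennreal (B * unit_ball_vol DIM('a) * \<rho> ^ DIM('a))"
proof -
  have "emeasure (density lborel f) (cball x \<rho>) = (\<integral>\<^sup>+y. f y * indicator (cball x \<rho>) y \<partial>lborel)"
    using f_meas by (simp add: emeasure_density)
  also have "\<dots> \<le> (\<integral>\<^sup>+y. ennreal B * indicator (cball x \<rho>) y \<partial>lborel)"
    by (intro nn_integral_mono mult_right_mono) (auto simp: f_le)
  also have "\<dots> = ennreal B * emeasure lborel (cball x \<rho>)"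
    by (simp add: nn_integral_cmult_indicator)
  also have "\<dots> = ennreal (B * unit_ball_vol DIM('a) * \<rho> ^ DIM('a))"
    using \<rho> B by (simp add: emeasure_cball ennreal_mult mult.assoc)
  finally show ?thesis .
qed

lemma (in prob_space) distr_restrict_eq_PiM_iid:
  assumes "I \<noteq> {}" and indep: "indep_vars (\<lambda>_. N) X I"
    and rv: "\<And>i. i \<in> I \<Longrightarrow> random_variable N (X i)"
    and distr_eq: "\<And>i. i \<in> I \<Longrightarrow> distr M N (X i) = D"
  shows "distr M (\<Pi>\<^sub>M i\<in>I. N) (\<lambda>\<omega>. \<lambda>i\<in>I. X i \<omega>) = (\<Pi>\<^sub>M i\<in>I. D)"
proof -
  have "distr M (\<Pi>\<^sub>M i\<in>I. N) (\<lambda>\<omega>. \<lambda>i\<in>I. X i \<omega>) = (\<Pi>\<^sub>M i\<in>I. distr M N (X i))"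
    by (subst indep_vars_iff_distr_eq_PiM'[symmetric, OF \<open>I \<noteq> {}\<close>]) (auto simp: rv indep)
  also have "\<dots> = (\<Pi>\<^sub>M i\<in>I. D)"
    by (intro PiM_cong) (auto simp: distr_eq)
  finally show ?thesis .
qed

lemma sets_PiM_dist_first_le:
  fixes N :: "'a::{metric_space, second_countable_topology} measure" and k :: nat
  assumes sets_N: "sets N = sets borel" and "0 < k"
  shows "{x \<in> space (\<Pi>\<^sub>M i\<in>{..<k}. N). \<forall>i<k. dist (x 0) (x i) \<le> \<rho>} \<in> sets (\<Pi>\<^sub>M i\<in>{..<k}. N)"
proof -
  have component: "(\<lambda>x. x i) \<in> borel_measurable (\<Pi>\<^sub>M i\<in>{..<k}. N)" if "i < k" for i
    using measurable_component_singleton[of i "{..<k}" "\<lambda>_. N"] that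
    by (simp add: measurable_cong_sets[OF refl sets_N])
  have "(\<lambda>x. dist (x 0) (x i)) \<in> borel_measurable (\<Pi>\<^sub>M i\<in>{..<k}. N)" if "i < k" for i
    using component[OF \<open>0 < k\<close>] component[OF that] by (rule borel_measurable_dist)
  then have "{x \<in> space (\<Pi>\<^sub>M i\<in>{..<k}. N). \<forall>i\<in>{..<k}. dist (x 0) (x i) \<le> \<rho>} \<in> sets (\<Pi>\<^sub>M i\<in>{..<k}. N)"
    by (intro sets.sets_Collect_finite_All) auto
  then show ?thesis by (simp only: Ball_def lessThan_iff)
qed

lemma emeasure_PiM_dist_first_le:
  fixes D :: "'a::{metric_space, second_countable_topology} measure" and k :: nat
  assumes D: "prob_space D" and sets_D: "sets D = sets borel" and "0 < k" and "0 \<le> \<rho>"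
    and cball_le: "\<And>y. emeasure D (cball y \<rho>) \<le> c"
  shows "emeasure (\<Pi>\<^sub>M i\<in>{..<k}. D) {x \<in> space (\<Pi>\<^sub>M i\<in>{..<k}. D). \<forall>i<k. dist (x 0) (x i) \<le> \<rho>}
           \<le> c ^ (k - 1)"
proof -
  interpret product_sigma_finite "\<lambda>_::nat. D"
    using D by (simp add: product_sigma_finite_def prob_space_imp_sigma_finite)
  define T where "T = {x \<in> space (\<Pi>\<^sub>M i\<in>{..<k}. D). \<forall>i<k. dist (x 0) (x i) \<le> \<rho>}"
  have T: "T \<in> sets (\<Pi>\<^sub>M i\<in>{..<k}. D)"
    unfolding T_def using sets_PiM_dist_first_le[OF sets_D \<open>0 < k\<close>] .
  have slice: "indicator T (x(0 := y)) = (indicator (\<Pi>\<^sub>E i\<in>{1..<k}. cball y \<rho>) x :: ennreal)"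
    if "x \<in> space (\<Pi>\<^sub>M i\<in>{1..<k}. D)" for x y
    using that \<open>0 < k\<close> \<open>0 \<le> \<rho>\<close>
    by (auto simp: T_def space_PiM PiE_def extensional_def sets_eq_imp_space_eq[OF sets_D]
                   dist_commute Pi_def indicator_def split: if_splits) (metis Suc_le_eq)
  have indices: "{..<k} = insert 0 {1..<k}"
    using \<open>0 < k\<close> by auto
  have "emeasure (\<Pi>\<^sub>M i\<in>{..<k}. D) T = (\<integral>\<^sup>+x. indicator T x \<partial>(\<Pi>\<^sub>M i\<in>{..<k}. D))"
    using T by simp
  also have "\<dots> = (\<integral>\<^sup>+y. (\<integral>\<^sup>+x. indicator T (x(0 := y)) \<partial>(\<Pi>\<^sub>M i\<in>{1..<k}. D)) \<partial>D)"
    using T unfolding indices by (intro product_nn_integral_insert_rev) auto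
  also have "\<dots> = (\<integral>\<^sup>+y. emeasure (\<Pi>\<^sub>M i\<in>{1..<k}. D) (\<Pi>\<^sub>E i\<in>{1..<k}. cball y \<rho>) \<partial>D)"
  proof (intro nn_integral_cong)
    fix y
    have "(\<integral>\<^sup>+x. indicator T (x(0 := y)) \<partial>(\<Pi>\<^sub>M i\<in>{1..<k}. D))
        = (\<integral>\<^sup>+x. indicator (\<Pi>\<^sub>E i\<in>{1..<k}. cball y \<rho>) x \<partial>(\<Pi>\<^sub>M i\<in>{1..<k}. D))"
      by (intro nn_integral_cong slice)
    also have "\<dots> = emeasure (\<Pi>\<^sub>M i\<in>{1..<k}. D) (\<Pi>\<^sub>E i\<in>{1..<k}. cball y \<rho>)"
      using sets_D by (intro nn_integral_indicator sets_PiM_I_finite) auto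
    finally show "(\<integral>\<^sup>+x. indicator T (x(0 := y)) \<partial>(\<Pi>\<^sub>M i\<in>{1..<k}. D))
        = emeasure (\<Pi>\<^sub>M i\<in>{1..<k}. D) (\<Pi>\<^sub>E i\<in>{1..<k}. cball y \<rho>)" .
  qed
  also have "\<dots> = (\<integral>\<^sup>+y. emeasure D (cball y \<rho>) ^ (k - 1) \<partial>D)"
    using sets_D by (simp add: emeasure_PiM)
  also have "\<dots> \<le> (\<integral>\<^sup>+y. c ^ (k - 1) \<partial>D)"
    by (intro nn_integral_mono power_mono cball_le) simp
  also have "\<dots> = c ^ (k - 1)"
    using D by (simp add: prob_space.emeasure_space_1)
  finally show ?thesis unfolding T_def .
qed

lemma (in prob_space) prob_in_common_cball_le:
  fixes X :: "nat \<Rightarrow> 'a \<Rightarrow> 'b::{metric_space, second_countable_topology}" and k :: nat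
  assumes indep: "indep_vars (\<lambda>_. borel) X {..<k}" and "0 < k" and "0 \<le> r"
    and rv: "\<And>i. i < k \<Longrightarrow> random_variable borel (X i)"
    and distr_eq: "\<And>i. i < k \<Longrightarrow> distr M borel (X i) = D"
    and cball_le: "\<And>y. emeasure D (cball y (2 * r)) \<le> ennreal c" and "0 \<le> c"
  shows "prob {\<omega> \<in> space M. \<exists>z. \<forall>i<k. X i \<omega> \<in> cball z r} \<le> c ^ (k - 1)"
proof -
  define Y where "Y = (\<lambda>\<omega>. \<lambda>i\<in>{..<k}. X i \<omega>)"
  define T :: "(nat \<Rightarrow> 'b) set"
    where "T = {x \<in> space (\<Pi>\<^sub>M i\<in>{..<k}. borel). \<forall>i<k. dist (x 0) (x i) \<le> 2 * r}"
  have D: "prob_space D"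
    unfolding distr_eq[OF \<open>0 < k\<close>, symmetric] by (rule prob_space_distr[OF rv[OF \<open>0 < k\<close>]])
  have sets_D: "sets D = sets borel"
    unfolding distr_eq[OF \<open>0 < k\<close>, symmetric] by simp
  have Y: "Y \<in> measurable M (\<Pi>\<^sub>M i\<in>{..<k}. borel)"
    unfolding Y_def using rv by (intro measurable_restrict) auto
  have Y_distr: "distr M (\<Pi>\<^sub>M i\<in>{..<k}. borel) Y = (\<Pi>\<^sub>M i\<in>{..<k}. D)"
    unfolding Y_def using \<open>0 < k\<close> indep rv distr_eq by (intro distr_restrict_eq_PiM_iid) auto
  have T: "T \<in> sets (\<Pi>\<^sub>M i\<in>{..<k}. borel)"
    unfolding T_def by (rule sets_PiM_dist_first_le[OF refl \<open>0 < k\<close>])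
  have "{\<omega> \<in> space M. \<exists>z. \<forall>i<k. X i \<omega> \<in> cball z r} \<subseteq> Y -` T \<inter> space M"
  proof
    fix \<omega> assume "\<omega> \<in> {\<omega> \<in> space M. \<exists>z. \<forall>i<k. X i \<omega> \<in> cball z r}"
    then obtain z where \<omega>: "\<omega> \<in> space M" and z: "\<forall>i<k. X i \<omega> \<in> cball z r"
      by blast
    have "dist (X 0 \<omega>) (X i \<omega>) \<le> 2 * r" if "i < k" for i
    proof -
      have "dist (X 0 \<omega>) z \<le> r" and "dist (X i \<omega>) z \<le> r"
        using z \<open>0 < k\<close> that by (auto simp: dist_commute)
      with dist_triangle2[of "X 0 \<omega>" "X i \<omega>" z] show ?thesis by linarith
    qed
    then show "\<omega> \<in> Y -` T \<inter> space M"
      using \<omega> \<open>0 < k\<close> by (auto simp: Y_def T_def space_PiM)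
  qed
  then have "prob {\<omega> \<in> space M. \<exists>z. \<forall>i<k. X i \<omega> \<in> cball z r} \<le> prob (Y -` T \<inter> space M)"
    using measurable_sets[OF Y T] by (rule finite_measure_mono)
  also have "prob (Y -` T \<inter> space M) \<le> c ^ (k - 1)"
  proof -
    have "emeasure M (Y -` T \<inter> space M) = emeasure (\<Pi>\<^sub>M i\<in>{..<k}. D) T"
      using Y T by (simp add: emeasure_distr Y_distr[symmetric])
    also have "\<dots> \<le> ennreal c ^ (k - 1)"
      using emeasure_PiM_dist_first_le[OF D sets_D \<open>0 < k\<close>, of "2 * r" "ennreal c"] cball_le \<open>0 \<le> r\<close>
      by (simp add: T_def Y_distr[symmetric])
    finally show ?thesis
      using \<open>0 \<le> c\<close> by (simp add: measure_def enn2real_leI ennreal_power)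
  qed
  finally show ?thesis .
qed

lemma (in prob_space) prob_iid_density_in_common_cball_le:
  fixes f :: "'b::euclidean_space \<Rightarrow> ennreal" and X :: "nat \<Rightarrow> 'a \<Rightarrow> 'b" and k :: nat
  assumes indep: "indep_vars (\<lambda>_. borel) X {..<k}"
    and distributed: "\<And>i. i < k \<Longrightarrow> distributed M lborel (X i) f"
    and f_le: "\<And>x. f x \<le> ennreal B" and "0 \<le> B" and "0 < r"
  shows "prob {\<omega> \<in> space M. \<exists>z. \<forall>i<k. X i \<omega> \<in> cball z r}
           \<le> (B * unit_ball_vol DIM('b) * 2 ^ DIM('b)) ^ (k - 1) * r ^ (DIM('b) * (k - 1))"
proof (cases "k = 0")
  case True
  then show ?thesis by (simp add: prob_space)
next
  case False
  have rv: "random_variable borel (X i)" if "i < k" for i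
    using distributed[OF that] distributed_measurable by fastforce
  have distr_eq: "distr M borel (X i) = density lborel f" if "i < k" for i
  proof -
    have "distr M borel (X i) = distr M lborel (X i)"
      by (intro distr_cong) auto
    also have "\<dots> = density lborel f"
      using distributed[OF that] by (rule distributed_distr_eq_density)
    finally show ?thesis .
  qed
  have f_meas: "f \<in> borel_measurable lborel"
    using distributed[of 0] False by (simp add: distributed_def)
  have "prob {\<omega> \<in> space M. \<exists>z. \<forall>i<k. X i \<omega> \<in> cball z r}
      \<le> (B * unit_ball_vol DIM('b) * (2 * r) ^ DIM('b)) ^ (k - 1)"
  proof (rule prob_in_common_cball_le[OF indep _ _ rv distr_eq])
    show "emeasure (density lborel f) (cball y (2 * r))
        \<le> ennreal (B * unit_ball_vol DIM('b) * (2 * r) ^ DIM('b))" for y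
      using \<open>0 < r\<close> \<open>0 \<le> B\<close> by (intro emeasure_density_cball_le[OF f_meas f_le]) auto
  qed (use False \<open>0 < r\<close> \<open>0 \<le> B\<close> in auto)
  also have "\<dots> = (B * unit_ball_vol DIM('b) * 2 ^ DIM('b)) ^ (k - 1) * r ^ (DIM('b) * (k - 1))"
    by (simp add: power_mult_distrib power_mult mult.assoc)
  finally show ?thesis .
qed

theorem lemma5p1:
  fixes f :: "'a::euclidean_space \<Rightarrow> ennreal" and k :: nat
  assumes f_meas: "f \<in> borel_measurable lborel"
    and f_int: "(\<integral>\<^sup>+ x. f x \<partial>lborel) = 1"
    and f_bdd: "\<exists>B::real. \<forall>x. f x \<le> ennreal B"
  shows "\<exists>c::real. \<forall>(M::'b measure) (X::nat \<Rightarrow> 'b \<Rightarrow> 'a) (r::real).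
           prob_space M \<and> prob_space.indep_vars M (\<lambda>_. borel) X {..<k}
           \<and> (\<forall>i<k. distributed M lborel (X i) f) \<and> r > 0
           \<longrightarrow> measure M {\<omega> \<in> space M. \<exists>z. \<forall>i<k. X i \<omega> \<in> cball z r}
               \<le> c * r ^ (DIM('a) * (k - 1))"
proof -
  obtain B where B: "\<forall>x. f x \<le> ennreal B" using f_bdd by blast
  show ?thesis
  proof (intro exI[of _ "(max B 0 * unit_ball_vol DIM('a) * 2 ^ DIM('a)) ^ (k - 1)"] allI impI,
      elim conjE)
    fix M :: "'b measure" and X :: "nat \<Rightarrow> 'b \<Rightarrow> 'a" and r :: real
    assume "prob_space M" and "prob_space.indep_vars M (\<lambda>_. borel) X {..<k}"
      and "\<forall>i<k. distributed M lborel (X i) f" and "0 < r"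
    then show "measure M {\<omega> \<in> space M. \<exists>z. \<forall>i<k. X i \<omega> \<in> cball z r}
        \<le> (max B 0 * unit_ball_vol DIM('a) * 2 ^ DIM('a)) ^ (k - 1) * r ^ (DIM('a) * (k - 1))"
      using B by (intro prob_space.prob_iid_density_in_common_cball_le[where B = "max B 0"]) auto
  qed
qed

end
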